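(* Let $Y$ be a normed linear space, $F\subset\mathbb R^n$, $x\in F\cap\operatorname{der}F$, $f\colon F\to Y$, and let $L\in\mathcal L(\mathbb R^n,Y)$ be a relative strict derivative of $f$ at $x$ (with respect to $F$). Let $v_1,\dots,v_n\in\operatorname{Ptg}(F,x)$ be unit vectors and $|\det(v_1,\dots,v_n)|>d>0$. Then $$\|L\|_{\mathcal L(\mathbb R^n,Y)}\le\limsup_{\substack{y\to x,\ z\to x\\ y,z\in F,\ y\ne z}}\frac nd\,\frac{\|f(y)-f(z)\|_Y}{|y-z|}.$$
   Context: $\operatorname{der}F$ is the set of accumulation points of $F$. The paratingent cone $\operatorname{Ptg}(F,x)$ is the set of $v\in\mathbb R^n$ for which there are $x_k,y_k\in F$ and $\alpha_k\in\mathbb R$ ($k\in\mathbb N$) with $x_k\to x$, $y_k\to x$ and $\alpha_k(y_k-x_k)\to v$. $L$ is a relative strict derivative of $f$ at $x$ if $x$ is isolated in $F$ or $\|f(y)-f(z)-L(y-z)\|/|y-z|\to0$ as $y,z\to x$, $y,z\in F$, $y\ne z$ (with $y=x$ or $z=x$ allowed). *)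

theory Defs
  imports "HOL-Analysis.Analysis"
begin

definition pair_filter :: "'a::real_normed_vector set \<Rightarrow> 'a \<Rightarrow> ('a \<times> 'a) filter" where
  "pair_filter F x = at (x, x) within {(y, z). y \<in> F \<and> z \<in> F \<and> y \<noteq> z}"

definition Ptg :: "'a::real_normed_vector set \<Rightarrow> 'a \<Rightarrow> 'a set" where
  "Ptg F x = {v. \<exists>xs ys (\<alpha>::nat \<Rightarrow> real).
      (\<forall>k. xs k \<in> F \<and> ys k \<in> F) \<and> xs \<longlonglongrightarrow> x \<and> ys \<longlonglongrightarrow> x \<and>
      (\<lambda>k. \<alpha> k *\<^sub>R (ys k - xs k)) \<longlonglongrightarrow> v}"

definition rel_strict_deriv ::
  "('a::real_normed_vector \<Rightarrow> 'b::real_normed_vector) \<Rightarrow> ('a \<Rightarrow> 'b) \<Rightarrow> 'a set \<Rightarrow> 'a \<Rightarrow> bool" where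
  "rel_strict_deriv f L F x \<longleftrightarrow>
     \<not> x islimpt F \<or>
     ((\<lambda>(y, z). norm (f y - f z - L (y - z)) / norm (y - z)) \<longlongrightarrow> 0) (pair_filter F x)"

end

theory Submission imports Defs begin

text \<open>
  Let \<open>V\<close> be the matrix with columns \<open>v\<^sub>j\<close>. By Cramer's rule and Hadamard's inequality,
  every vector \<open>u\<close> is a combination \<open>\<Sum>j. c\<^sub>j v\<^sub>j\<close> with \<open>|c\<^sub>j| \<le> |u| / |det V| < |u| / d\<close>,
  so \<open>\<parallel>L\<parallel> \<le> (n/d) max\<^sub>j \<parallel>L v\<^sub>j\<parallel>\<close>.
  Each \<open>v\<^sub>j\<close> is a limit of rescaled differences \<open>\<alpha>\<^sub>k (y\<^sub>k - z\<^sub>k)\<close> of points of \<open>F\<close> tending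
  to \<open>x\<close>; along these pairs strict differentiability makes the difference quotients of \<open>f\<close>
  converge to \<open>\<parallel>L v\<^sub>j\<parallel>\<close>, which is therefore below the limsup.

  Hadamard's inequality is obtained by maximizing \<open>|det|\<close> over matrices whose rows lie in the
  unit ball: at a maximizer every row is parallel to its cofactor vector, which is orthogonal
  to all other rows, so the maximizer is an orthogonal matrix.
\<close>

lemma det_replace_row_eq_inner:
  fixes A :: "real^'n^'n"
  shows "det (\<chi> i. if i = k then w else A$i) =
         (\<chi> j. det (\<chi> i. if i = k then axis j 1 else A$i)) \<bullet> w"
proof -
  have "det (\<chi> i. if i = k then w else A$i) =
        det (\<chi> i. if i = k then (\<Sum>j\<in>UNIV. w$j *s axis j 1) else A$i)"
    by (simp only: basis_expansion)
  also have "\<dots> = (\<Sum>j\<in>UNIV. det (\<chi> i. if i = k then w$j *s axis j 1 else A$i))"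
    by (rule det_linear_row_sum) simp
  also have "\<dots> = (\<Sum>j\<in>UNIV. w$j * det (\<chi> i. if i = k then axis j 1 else A$i))"
    by (simp add: det_row_mul)
  also have "\<dots> = (\<chi> j. det (\<chi> i. if i = k then axis j 1 else A$i)) \<bullet> w"
    by (simp add: inner_vec_def mult.commute)
  finally show ?thesis .
qed

lemma mat_1_row: "(mat 1 :: 'a::zero_neq_one^'n^'n) $ i = axis i 1"
  by (simp add: mat_def axis_def vec_eq_iff)

lemma continuous_on_det: "continuous_on S (\<lambda>A::real^'n^'n. det A)"
  unfolding det_def by (intro continuous_intros)

lemma compact_rows_norm_le_1: "compact {A::real^'n^'n. \<forall>i. norm (A$i) \<le> 1}"
  unfolding compact_eq_bounded_closed
proof
  show "bounded {A::real^'n^'n. \<forall>i. norm (A$i) \<le> 1}"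
    unfolding bounded_iff
  proof (intro exI ballI)
    fix A :: "real^'n^'n" assume "A \<in> {A. \<forall>i. norm (A$i) \<le> 1}"
    then have "norm (A$i) \<le> 1" for i by simp
    have "norm A \<le> (\<Sum>i\<in>UNIV. norm (A$i))"
      unfolding norm_vec_def by (rule L2_set_le_sum) simp
    also have "\<dots> \<le> (\<Sum>i\<in>(UNIV::'n set). 1)"
      by (rule sum_mono) (use \<open>\<And>i. norm (A$i) \<le> 1\<close> in simp)
    finally show "norm A \<le> real CARD('n)" by simp
  qed
  show "closed {A::real^'n^'n. \<forall>i. norm (A$i) \<le> 1}"
    by (intro closed_Collect_all closed_Collect_le continuous_intros)
qed

lemma orthogonal_matrix_if_maximizes_abs_det:
  fixes A :: "real^'n^'n"
  assumes rows_A: "\<And>i. norm (A$i) \<le> 1"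
    and max_A: "\<And>B::real^'n^'n. (\<And>i. norm (B$i) \<le> 1) \<Longrightarrow> \<bar>det B\<bar> \<le> \<bar>det A\<bar>"
  shows "orthogonal_matrix A"
proof -
  have det_A: "1 \<le> \<bar>det A\<bar>"
    using max_A[of "mat 1"] by (simp add: mat_1_row)
  define c where "c k = (\<chi> j. det (\<chi> i. if i = k then axis j 1 else A$i))" for k
  have det_c: "det (\<chi> i. if i = k then w else A$i) = c k \<bullet> w" for k w
    unfolding c_def by (rule det_replace_row_eq_inner)
  have det_A_c: "\<bar>det A\<bar> = \<bar>c k \<bullet> A$k\<bar>" for k
  proof -
    have "(\<chi> i. if i = k then A$k else A$i) = A" by (simp add: vec_eq_iff)
    then show ?thesis using det_c[of k "A$k"] by simp
  qed
  have c_orth: "c k \<bullet> A$m = 0" if "m \<noteq> k" for k m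
  proof -
    have "det (\<chi> i. if i = k then A$m else A$i) = 0"
      by (rule det_identical_rows[OF that]) (simp add: row_def vec_eq_iff that)
    then show ?thesis using det_c by simp
  qed
  have c_nonzero: "c k \<noteq> 0" for k
    using det_A det_A_c[of k] by auto
  \<comment> \<open>Testing maximality against the unit vector in direction \<open>c k\<close> gives \<open>\<parallel>c k\<parallel> \<le> |det A|\<close>.\<close>
  have c_le: "norm (c k) \<le> \<bar>c k \<bullet> A$k\<bar>" for k
  proof -
    define u where "u = (1 / norm (c k)) *\<^sub>R c k"
    have "norm u = 1" using c_nonzero by (simp add: u_def)
    then have "\<bar>c k \<bullet> u\<bar> \<le> \<bar>det A\<bar>"
      using max_A[of "\<chi> i. if i = k then u else A$i"] rows_A det_c by auto
    moreover have "c k \<bullet> u = norm (c k)"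
      using c_nonzero by (simp add: u_def dot_square_norm power2_eq_square)
    ultimately show ?thesis using det_A_c by simp
  qed
  have cs_eq: "\<bar>c k \<bullet> A$k\<bar> = norm (c k) * norm (A$k)" and norm_row: "norm (A$k) = 1" for k
  proof -
    have "norm (c k) * norm (A$k) \<le> norm (c k)"
      using rows_A[of k] c_nonzero by simp
    then show "\<bar>c k \<bullet> A$k\<bar> = norm (c k) * norm (A$k)"
      using c_le[of k] Cauchy_Schwarz_ineq2[of "c k" "A$k"] by linarith
    then show "norm (A$k) = 1"
      using c_le[of k] rows_A[of k] c_nonzero by (simp add: mult_le_cancel_left1)
  qed
  show ?thesis
    unfolding orthogonal_matrix_orthonormal_rows
  proof (intro conjI allI impI)
    fix i show "norm (row i A) = 1" using norm_row[of i] by (simp add: row_def)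
  next
    fix i j :: 'n assume "i \<noteq> j"
    have "norm (c i) *\<^sub>R A$i = c i \<or> norm (c i) *\<^sub>R A$i = - c i"
      using norm_cauchy_schwarz_abs_eq[THEN iffD1, OF cs_eq[of i]] by (simp add: norm_row)
    then have "norm (c i) * (A$i \<bullet> A$j) = 0"
      using c_orth[of j i] \<open>i \<noteq> j\<close> by (auto simp flip: inner_scaleR_left)
    then show "orthogonal (row i A) (row j A)"
      using c_nonzero by (simp add: row_def orthogonal_def)
  qed
qed

lemma abs_det_le_1_if_rows_norm_le_1:
  fixes B :: "real^'n^'n"
  assumes "\<And>i. norm (B$i) \<le> 1"
  shows "\<bar>det B\<bar> \<le> 1"
proof -
  define K where "K = {A::real^'n^'n. \<forall>i. norm (A$i) \<le> 1}"
  have "continuous_on K (\<lambda>A. \<bar>det A\<bar>)"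
    by (intro continuous_intros continuous_on_det)
  moreover have "mat 1 \<in> K"
    by (simp add: K_def mat_1_row)
  ultimately obtain A where "A \<in> K" and max_A: "\<forall>B\<in>K. \<bar>det B\<bar> \<le> \<bar>det A\<bar>"
    using continuous_attains_sup[of K] compact_rows_norm_le_1 unfolding K_def by blast
  then have "orthogonal_matrix A"
    by (intro orthogonal_matrix_if_maximizes_abs_det) (auto simp: K_def)
  then have "\<bar>det A\<bar> = 1"
    using det_orthogonal_matrix by fastforce
  then show ?thesis
    using max_A assms by (force simp: K_def)
qed

theorem abs_det_le_prod_norm_rows:
  fixes A :: "real^'n^'n"
  shows "\<bar>det A\<bar> \<le> (\<Prod>i\<in>UNIV. norm (A$i))"
proof (cases "\<exists>i. A$i = 0")
  case True
  then obtain i where "row i A = 0" by (auto simp: row_def vec_eq_iff)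
  then have "det A = 0" by (rule det_zero_row)
  then show ?thesis by (simp add: prod_nonneg)
next
  case False
  define B where "B = (\<chi> i. (1 / norm (A$i)) *s A$i)"
  have "(\<chi> i. norm (A$i) *s B$i) = A"
    using False by (simp add: B_def vec_eq_iff)
  then have "det A = (\<Prod>i\<in>UNIV. norm (A$i)) * det B"
    using det_rows_mul[of "\<lambda>i. norm (A$i)" "\<lambda>i. B$i"] by simp
  moreover have "\<bar>det B\<bar> \<le> 1"
    by (rule abs_det_le_1_if_rows_norm_le_1) (simp add: B_def scalar_mult_eq_scaleR)
  ultimately show ?thesis
    by (simp add: abs_mult prod_nonneg mult_left_le)
qed

corollary abs_det_le_prod_norm_columns:
  fixes A :: "real^'n^'n"
  shows "\<bar>det A\<bar> \<le> (\<Prod>j\<in>UNIV. norm (column j A))"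
proof -
  have "transpose A $ j = column j A" for j
    by (simp add: transpose_def column_def)
  then show ?thesis
    using abs_det_le_prod_norm_rows[of "transpose A"] by simp
qed

lemma abs_coordinate_mult_abs_det_le:
  fixes V :: "real^'n^'n"
  assumes "\<And>j. norm (column j V) \<le> 1"
  shows "\<bar>c$k\<bar> * \<bar>det V\<bar> \<le> norm (V *v c)"
proof -
  define W where "W = (\<chi> i j. if j = k then (V *v c)$i else V$i$j)"
  have columns_W: "column j W = (if j = k then V *v c else column j V)" for j
    by (simp add: W_def column_def vec_eq_iff)
  have "\<bar>c$k\<bar> * \<bar>det V\<bar> = \<bar>det W\<bar>"
    unfolding W_def cramer_lemma by (simp add: abs_mult)
  also have "\<dots> \<le> (\<Prod>j\<in>UNIV. norm (column j W))"
    by (rule abs_det_le_prod_norm_columns)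
  also have "\<dots> = norm (V *v c) * (\<Prod>j\<in>UNIV - {k}. norm (column j V))"
    by (simp add: prod.remove[of UNIV k] columns_W)
  also have "\<dots> \<le> norm (V *v c)"
    using assms by (intro mult_left_le prod_le_1) auto
  finally show ?thesis .
qed

lemma onorm_le_card_div_abs_det:
  fixes V :: "real^'n^'n" and L :: "real^'n \<Rightarrow> 'b::real_normed_vector"
  assumes "linear L" and "det V \<noteq> 0"
    and columns_V: "\<And>j. norm (column j V) \<le> 1" and L_columns: "\<And>j. norm (L (column j V)) \<le> M"
  shows "onorm L \<le> real CARD('n) / \<bar>det V\<bar> * M"
proof (rule onorm_bound)
  show "0 \<le> real CARD('n) / \<bar>det V\<bar> * M"
    using order_trans[OF norm_ge_zero L_columns] by simp
  fix u
  obtain c where "V *v c = u"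
    using cramer[OF \<open>det V \<noteq> 0\<close>] by blast
  then have "L u = (\<Sum>j\<in>UNIV. c$j *\<^sub>R L (column j V))"
    using \<open>linear L\<close> by (auto simp: matrix_mult_sum linear_sum linear_scale scalar_mult_eq_scaleR)
  also have "norm \<dots> \<le> (\<Sum>j\<in>(UNIV::'n set). norm u / \<bar>det V\<bar> * M)"
  proof (rule order_trans[OF norm_sum], rule sum_mono)
    fix j
    have "\<bar>c$j\<bar> \<le> norm u / \<bar>det V\<bar>"
      using abs_coordinate_mult_abs_det_le[OF columns_V, of c j] \<open>V *v c = u\<close> \<open>det V \<noteq> 0\<close>
      by (simp add: pos_le_divide_eq)
    then have "\<bar>c$j\<bar> * norm (L (column j V)) \<le> norm u / \<bar>det V\<bar> * M"
      by (rule mult_mono[OF _ L_columns]) auto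
    then show "norm (c$j *\<^sub>R L (column j V)) \<le> norm u / \<bar>det V\<bar> * M"
      by simp
  qed
  finally show "norm (L u) \<le> real CARD('n) / \<bar>det V\<bar> * M * norm u"
    by (simp add: ac_simps)
qed

lemma obtain_maximizer_finite:
  fixes g :: "'a::finite \<Rightarrow> 'b::linorder"
  obtains m where "\<And>j. g j \<le> g m"
proof -
  have "Max (range g) \<in> range g"
    by (rule Max_in) auto
  then obtain m where "Max (range g) = g m"
    by (rule rangeE)
  then show thesis
    by (intro that[of m]) (simp flip: \<open>Max _ = _\<close>)
qed

lemma tendsto_le_Limsup:
  fixes g :: "'a \<Rightarrow> 'b::{complete_linorder,linorder_topology}"
  assumes "filterlim s F G" and "G \<noteq> bot" and "((\<lambda>k. g (s k)) \<longlongrightarrow> l) G"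
  shows "l \<le> Limsup F g"
proof (rule Limsup_greatest)
  fix P assume "eventually P F"
  then have "eventually (\<lambda>k. P (s k)) G"
    using assms(1) by (simp add: filterlim_iff)
  then have "eventually (\<lambda>k. g (s k) \<le> Sup (g ` Collect P)) G"
    by eventually_elim (simp add: SUP_upper)
  then show "l \<le> Sup (g ` Collect P)"
    using tendsto_le[OF assms(2) tendsto_const assms(3)] by simp
qed

lemma norm_quotient_bounded_linear_tendsto:
  assumes "bounded_linear L" and lim: "(\<lambda>k. \<alpha> k *\<^sub>R w k) \<longlonglongrightarrow> v" and "v \<noteq> 0"
  shows "(\<lambda>k. norm (L (w k)) / norm (w k)) \<longlonglongrightarrow> norm (L v) / norm v"
proof -
  have "(\<lambda>k. norm (L (\<alpha> k *\<^sub>R w k)) / norm (\<alpha> k *\<^sub>R w k)) \<longlonglongrightarrow> norm (L v) / norm v"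
    using \<open>v \<noteq> 0\<close> by (intro tendsto_divide tendsto_norm bounded_linear.tendsto[OF assms(1)] lim) simp
  moreover have "eventually (\<lambda>k. \<alpha> k *\<^sub>R w k \<noteq> 0) sequentially"
    using tendsto_imp_eventually_ne[OF lim \<open>v \<noteq> 0\<close>] .
  then have "eventually (\<lambda>k. norm (L (\<alpha> k *\<^sub>R w k)) / norm (\<alpha> k *\<^sub>R w k)
               = norm (L (w k)) / norm (w k)) sequentially"
    by eventually_elim (simp add: linear_scale bounded_linear.linear[OF assms(1)])
  ultimately show ?thesis
    by (rule Lim_transform_eventually)
qed

lemma Ptg_imp_pair_sequence:
  assumes "v \<in> Ptg F x" and "v \<noteq> 0"
  obtains y z and \<alpha> :: "nat \<Rightarrow> real"
  where "filterlim (\<lambda>k. (y k, z k)) (pair_filter F x) sequentially"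
    and "(\<lambda>k. \<alpha> k *\<^sub>R (y k - z k)) \<longlonglongrightarrow> v"
proof -
  obtain z y and \<alpha> :: "nat \<Rightarrow> real" where
    in_F: "\<forall>k. z k \<in> F \<and> y k \<in> F" and "z \<longlonglongrightarrow> x" and "y \<longlonglongrightarrow> x"
    and lim: "(\<lambda>k. \<alpha> k *\<^sub>R (y k - z k)) \<longlonglongrightarrow> v"
    using assms(1) unfolding Ptg_def by blast
  have "eventually (\<lambda>k. \<alpha> k *\<^sub>R (y k - z k) \<noteq> 0) sequentially"
    using tendsto_imp_eventually_ne[OF lim \<open>v \<noteq> 0\<close>] .
  then have "eventually (\<lambda>k. (y k, z k) \<in> {(y, z). y \<in> F \<and> z \<in> F \<and> y \<noteq> z} - {(x, x)}) sequentially"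
    by eventually_elim (use in_F in auto)
  then have "filterlim (\<lambda>k. (y k, z k)) (pair_filter F x) sequentially"
    unfolding pair_filter_def
    by (intro filterlim_at_withinI tendsto_Pair \<open>y \<longlonglongrightarrow> x\<close> \<open>z \<longlonglongrightarrow> x\<close>)
  then show ?thesis using lim by (rule that)
qed

lemma rel_strict_deriv_quotient_tendsto:
  assumes "x islimpt F" and "bounded_linear L" and "rel_strict_deriv f L F x"
    and "v \<in> Ptg F x" and "v \<noteq> 0"
  obtains y z
  where "filterlim (\<lambda>k. (y k, z k)) (pair_filter F x) sequentially"
    and "(\<lambda>k. norm (f (y k) - f (z k)) / norm (y k - z k)) \<longlonglongrightarrow> norm (L v) / norm v"
proof -
  obtain y z and \<alpha> :: "nat \<Rightarrow> real"
    where pairs: "filterlim (\<lambda>k. (y k, z k)) (pair_filter F x) sequentially"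
      and lim: "(\<lambda>k. \<alpha> k *\<^sub>R (y k - z k)) \<longlonglongrightarrow> v"
    using Ptg_imp_pair_sequence[OF assms(4,5)] .
  have "((\<lambda>(y, z). norm (f y - f z - L (y - z)) / norm (y - z)) \<longlongrightarrow> 0) (pair_filter F x)"
    using assms(1,3) unfolding rel_strict_deriv_def by blast
  from filterlim_compose[OF this pairs]
  have error: "(\<lambda>k. norm (f (y k) - f (z k) - L (y k - z k)) / norm (y k - z k)) \<longlonglongrightarrow> 0"
    by simp
  have "(\<lambda>k. norm (f (y k) - f (z k)) / norm (y k - z k) - norm (L (y k - z k)) / norm (y k - z k))
          \<longlonglongrightarrow> 0"
  proof (rule Lim_null_comparison[OF always_eventually error], intro allI)
    fix k
    have "\<bar>norm (f (y k) - f (z k)) - norm (L (y k - z k))\<bar> \<le> norm (f (y k) - f (z k) - L (y k - z k))"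
      by (rule norm_triangle_ineq3)
    then show "norm (norm (f (y k) - f (z k)) / norm (y k - z k) - norm (L (y k - z k)) / norm (y k - z k))
               \<le> norm (f (y k) - f (z k) - L (y k - z k)) / norm (y k - z k)"
      by (simp add: diff_divide_distrib[symmetric] divide_right_mono)
  qed
  from tendsto_add[OF this norm_quotient_bounded_linear_tendsto[OF assms(2) lim assms(5)]]
  have "(\<lambda>k. norm (f (y k) - f (z k)) / norm (y k - z k)) \<longlonglongrightarrow> norm (L v) / norm v"
    by simp
  with pairs show ?thesis by (rule that)
qed

theorem lemmaB1:
  fixes F :: "(real ^ 'n) set" and x :: "real ^ 'n"
    and f :: "real ^ 'n \<Rightarrow> 'b::real_normed_vector"
    and L :: "real ^ 'n \<Rightarrow> 'b"
    and v :: "'n \<Rightarrow> real ^ 'n" and d :: real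
  assumes "x \<in> F" and "x islimpt F"
    and "linear L"
    and "rel_strict_deriv f L F x"
    and "\<And>i. v i \<in> Ptg F x" and "\<And>i. norm (v i) = 1"
    and "\<bar>det (\<chi> i j. v j $ i)\<bar> > d" and "d > 0"
  shows "ereal (onorm L) \<le>
    Limsup (pair_filter F x)
      (\<lambda>(y, z). ereal (real CARD('n) / d * (norm (f y - f z) / norm (y - z))))"
proof -
  define K where "K = real CARD('n) / d"
  obtain m where max_m: "\<And>j. norm (L (v j)) \<le> norm (L (v m))"
    using obtain_maximizer_finite[of "\<lambda>j. norm (L (v j))"] by blast
  have columns: "column j (\<chi> i j. v j $ i) = v j" for j
    by (simp add: column_def vec_eq_iff)
  have "onorm L \<le> real CARD('n) / \<bar>det (\<chi> i j. v j $ i)\<bar> * norm (L (v m))"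
    using assms(3,6-8) max_m by (intro onorm_le_card_div_abs_det) (auto simp: columns)
  also have "\<dots> \<le> K * norm (L (v m))"
    unfolding K_def using assms(7,8) by (intro mult_right_mono divide_left_mono) auto
  finally have onorm_L: "onorm L \<le> K * norm (L (v m))" .
  have "v m \<noteq> 0" using assms(6)[of m] by auto
  then obtain y z
    where pairs: "filterlim (\<lambda>k. (y k, z k)) (pair_filter F x) sequentially"
      and "(\<lambda>k. norm (f (y k) - f (z k)) / norm (y k - z k)) \<longlonglongrightarrow> norm (L (v m))"
    using rel_strict_deriv_quotient_tendsto[OF assms(2) _ assms(4,5)] assms(3,6)
    by (auto simp: linear_conv_bounded_linear)
  then have "(\<lambda>k. ereal (K * (norm (f (y k) - f (z k)) / norm (y k - z k))))
               \<longlonglongrightarrow> ereal (K * norm (L (v m)))"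
    unfolding lim_ereal by (intro tendsto_mult_left)
  then have "ereal (K * norm (L (v m))) \<le>
      Limsup (pair_filter F x) (\<lambda>(y, z). ereal (K * (norm (f y - f z) / norm (y - z))))"
    by (intro tendsto_le_Limsup[OF pairs]) simp_all
  with onorm_L show ?thesis
    unfolding K_def by (meson ereal_less_eq(3) order_trans)
qed

end
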